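(* Let $G$ be a group generated by $x_1,\dots,x_n$, with finite commutator subgroup $C=[G,G]$, such that $G/C$ is free abelian of rank $n$ with basis the images of $x_1,\dots,x_n$. Let $P=X\cap\mathcal C_G(C)$ with $X=\{g_{\mathbf m}\in T: c_{\,x_1^{m_1}\cdots x_{k-1}^{m_{k-1}},\,x_k}=e \text{ for all } k=1,\dots,n\}$, and $Q=P\cap Z$, where $Z$ is the center of $G$. Then for $q\in G$: $q\in Q$ if and only if $q\,t=t\,q=(q\,t)^{ab}$ for every $t\in T$.
   Context: Notation: $\bar g=g^{-1}$, $c_{gh}=\bar g\,\bar h\,g\,h$; $\mathcal C_G(C)$ is the centralizer of $C$ in $G$. For $\mathbf r\in\mathbb Z^n$, $g_{\mathbf r}=x_1^{r_1}\cdots x_n^{r_n}$, and $T=\{g_{\mathbf r}\}$. Every $g\in G$ decomposes uniquely as $g=g_{\mathbf r}c$ with $c\in C$, and $g^{ab}$ denotes $g_{\mathbf r}$. *)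

theory Defs
  imports "HOL-Algebra.Algebra"
begin

definition comm :: "('a, 'b) monoid_scheme \<Rightarrow> 'a \<Rightarrow> 'a \<Rightarrow> 'a" where
  "comm G g h = inv\<^bsub>G\<^esub> g \<otimes>\<^bsub>G\<^esub> inv\<^bsub>G\<^esub> h \<otimes>\<^bsub>G\<^esub> g \<otimes>\<^bsub>G\<^esub> h"

text \<open>gmon G x m k = x_1^{m_1} ... x_k^{m_k}; g_m = gmon G x m n.\<close>
fun gmon :: "('a, 'b) monoid_scheme \<Rightarrow> (nat \<Rightarrow> 'a) \<Rightarrow> (nat \<Rightarrow> int) \<Rightarrow> nat \<Rightarrow> 'a" where
  "gmon G x m 0 = \<one>\<^bsub>G\<^esub>"
| "gmon G x m (Suc k) = gmon G x m k \<otimes>\<^bsub>G\<^esub> (x (Suc k) [^]\<^bsub>G\<^esub> m (Suc k))"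

text \<open>Exponent vectors in Z^n: functions supported on {1..n}.\<close>
definition zvecs :: "nat \<Rightarrow> (nat \<Rightarrow> int) set" where
  "zvecs n = {r. \<forall>i. i \<notin> {1..n} \<longrightarrow> r i = 0}"

definition Tset :: "('a, 'b) monoid_scheme \<Rightarrow> (nat \<Rightarrow> 'a) \<Rightarrow> nat \<Rightarrow> 'a set" where
  "Tset G x n = {gmon G x r n | r. r \<in> zvecs n}"

definition center :: "('a, 'b) monoid_scheme \<Rightarrow> 'a set" where
  "center G = {z \<in> carrier G. \<forall>g \<in> carrier G. z \<otimes>\<^bsub>G\<^esub> g = g \<otimes>\<^bsub>G\<^esub> z}"

definition centralizer :: "('a, 'b) monoid_scheme \<Rightarrow> 'a set \<Rightarrow> 'a set" where
  "centralizer G S = {z \<in> carrier G. \<forall>s \<in> S. z \<otimes>\<^bsub>G\<^esub> s = s \<otimes>\<^bsub>G\<^esub> z}"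

definition abpart :: "('a, 'b) monoid_scheme \<Rightarrow> (nat \<Rightarrow> 'a) \<Rightarrow> nat \<Rightarrow> 'a \<Rightarrow> 'a" where
  "abpart G x n g = (THE t. t \<in> Tset G x n \<and> (\<exists>c \<in> derived G (carrier G). g = t \<otimes>\<^bsub>G\<^esub> c))"

definition Xset :: "('a, 'b) monoid_scheme \<Rightarrow> (nat \<Rightarrow> 'a) \<Rightarrow> nat \<Rightarrow> 'a set" where
  "Xset G x n = {gmon G x m n | m. m \<in> zvecs n \<and>
      (\<forall>k \<in> {1..n}. comm G (gmon G x m (k - 1)) (x k) = \<one>\<^bsub>G\<^esub>)}"

definition Pset :: "('a, 'b) monoid_scheme \<Rightarrow> (nat \<Rightarrow> 'a) \<Rightarrow> nat \<Rightarrow> 'a set" where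
  "Pset G x n = Xset G x n \<inter> centralizer G (derived G (carrier G))"

definition Qset :: "('a, 'b) monoid_scheme \<Rightarrow> (nat \<Rightarrow> 'a) \<Rightarrow> nat \<Rightarrow> 'a set" where
  "Qset G x n = Pset G x n \<inter> center G"

end

theory Submission
  imports Defs
begin

text \<open>
  Since the images of the x_i form a basis of G/C, the set T meets every coset of C exactly
  once, so g^ab = g holds precisely for g in T. The right-hand side therefore says that q
  commutes with T, which contains the generators, i.e. q is central, and that T q is contained
  in T. Write q = g_m and a = x_1^m_1 ... x_(k-1)^m_(k-1). Raising the exponent m_k by one turns
  g_m into a x_k a^-1 g_m, which lies in the coset of x_k g_m; hence x_k g_m in T forces
  a x_k a^-1 = x_k, the defining condition of X. Conversely, under these conditions exponent
  vectors simply add: g_r g_m = g_(r+m). Centrality of q makes the condition on the centralizer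
  of C in P automatic.
\<close>

context group begin

lemma subgroup_centralizer:
  assumes "S \<subseteq> carrier G"
  shows "subgroup (centralizer G S) G"
proof (rule subgroupI)
  show "centralizer G S \<subseteq> carrier G"
    by (auto simp: centralizer_def)
  show "centralizer G S \<noteq> {}"
    using assms by (auto simp: centralizer_def subset_iff intro!: exI[of _ \<one>])
next
  fix a assume a: "a \<in> centralizer G S"
  have "inv a \<otimes> s = s \<otimes> inv a" if "s \<in> S" for s
  proof -
    have sa: "a \<otimes> s = s \<otimes> a" and carr: "s \<in> carrier G" "a \<in> carrier G"
      using a that assms by (auto simp: centralizer_def)
    have "inv a \<otimes> s = inv a \<otimes> (s \<otimes> a) \<otimes> inv a"
      using carr by (simp add: m_assoc)
    also have "\<dots> = s \<otimes> inv a"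
      using carr by (simp add: sa[symmetric] m_assoc[symmetric])
    finally show ?thesis .
  qed
  then show "inv a \<in> centralizer G S"
    using a by (simp add: centralizer_def)
next
  fix a b assume ab: "a \<in> centralizer G S" "b \<in> centralizer G S"
  have "a \<otimes> b \<otimes> s = s \<otimes> (a \<otimes> b)" if "s \<in> S" for s
  proof -
    have comm: "a \<otimes> s = s \<otimes> a" "b \<otimes> s = s \<otimes> b" and carr: "s \<in> carrier G" "a \<in> carrier G" "b \<in> carrier G"
      using ab that assms by (auto simp: centralizer_def)
    have "a \<otimes> b \<otimes> s = a \<otimes> (s \<otimes> b)"
      using carr by (simp add: comm(2)[symmetric] m_assoc)
    also have "\<dots> = s \<otimes> (a \<otimes> b)"
      using carr by (simp add: comm(1)[symmetric] m_assoc[symmetric])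
    finally show ?thesis .
  qed
  then show "a \<otimes> b \<in> centralizer G S"
    using ab by (simp add: centralizer_def)
qed

lemma commutes_int_pow:
  assumes "a \<in> carrier G" "b \<in> carrier G" "a \<otimes> b = b \<otimes> a"
  shows "a \<otimes> b [^] (i::int) = b [^] i \<otimes> a"
proof -
  have "b \<in> centralizer G {a}"
    using assms by (simp add: centralizer_def)
  then have "b [^] i \<in> centralizer G {a}"
    using assms by (intro subgroup_int_pow_closed subgroup_centralizer) auto
  then show ?thesis by (simp add: centralizer_def)
qed

lemma center_if_commutes_with_generators:
  assumes "generate G H = carrier G" "H \<subseteq> carrier G" "q \<in> carrier G"
    and "\<forall>h\<in>H. q \<otimes> h = h \<otimes> q"
  shows "q \<in> center G"
proof -
  have "H \<subseteq> centralizer G {q}"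
    using assms by (auto simp: centralizer_def)
  then have "carrier G \<subseteq> centralizer G {q}"
    using assms(1,3) by (metis generate_subgroup_incl subgroup_centralizer empty_subsetI insert_subset)
  then show ?thesis
    using assms(3) by (auto simp: center_def centralizer_def)
qed

lemma comm_eq_one_iff:
  assumes "a \<in> carrier G" "b \<in> carrier G"
  shows "comm G a b = \<one> \<longleftrightarrow> a \<otimes> b = b \<otimes> a"
proof -
  have "comm G a b = inv (b \<otimes> a) \<otimes> (a \<otimes> b)"
    using assms by (simp add: comm_def inv_mult_group m_assoc)
  then show ?thesis
    using assms by (simp add: inv_solve_left' eq_commute[of \<one>])
qed

lemma gmon_closed: "x ` {1..k} \<subseteq> carrier G \<Longrightarrow> gmon G x r k \<in> carrier G"
  by (induction k) (auto simp: image_subset_iff)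

lemma gmon_cong: "(\<And>j. j \<in> {1..k} \<Longrightarrow> r j = s j) \<Longrightarrow> gmon G x r k = gmon G x s k"
  by (induction k) auto

lemma gmon_zero [simp]: "gmon G x (\<lambda>_. 0) k = \<one>"
  by (induction k) auto

lemma gmon_mult:
  assumes "x ` {1..k} \<subseteq> carrier G"
    and "\<And>j. j \<in> {1..k} \<Longrightarrow> gmon G x m (j - 1) \<otimes> x j = x j \<otimes> gmon G x m (j - 1)"
  shows "gmon G x r k \<otimes> gmon G x m k = gmon G x (\<lambda>i. r i + m i) k"
  using assms
proof (induction k)
  case 0
  then show ?case by simp
next
  case (Suc k)
  let ?y = "x (Suc k)"
  have closed: "x ` {1..k} \<subseteq> carrier G" "?y \<in> carrier G"
    using Suc.prems(1) by auto
  have carr: "gmon G x r k \<in> carrier G" "gmon G x m k \<in> carrier G"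
    using gmon_closed[OF closed(1)] by auto
  have swap: "?y [^] r (Suc k) \<otimes> gmon G x m k = gmon G x m k \<otimes> ?y [^] r (Suc k)"
    using Suc.prems(2)[of "Suc k"] carr closed by (intro commutes_int_pow[symmetric]) auto
  have "gmon G x r (Suc k) \<otimes> gmon G x m (Suc k)
      = gmon G x r k \<otimes> (?y [^] r (Suc k) \<otimes> gmon G x m k) \<otimes> ?y [^] m (Suc k)"
    using carr closed by (simp add: m_assoc)
  also have "\<dots> = (gmon G x r k \<otimes> gmon G x m k) \<otimes> (?y [^] r (Suc k) \<otimes> ?y [^] m (Suc k))"
    unfolding swap using carr closed by (simp add: m_assoc)
  also have "\<dots> = gmon G x (\<lambda>i. r i + m i) (Suc k)"
    using Suc closed by (simp add: int_pow_mult)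
  finally show ?case .
qed

lemma gmon_incr_exponent:
  assumes "x ` {1..K} \<subseteq> carrier G" "k \<in> {1..K}"
  shows "gmon G x (r(k := r k + 1)) K
    = gmon G x r (k - 1) \<otimes> x k \<otimes> inv (gmon G x r (k - 1)) \<otimes> gmon G x r K"
  using assms
proof (induction K)
  case 0
  then show ?case by simp
next
  case (Suc K)
  have closed: "x ` {1..K} \<subseteq> carrier G" "x ` {1..k - 1} \<subseteq> carrier G"
      "x k \<in> carrier G" "x (Suc K) \<in> carrier G"
    using Suc.prems by (force simp: image_subset_iff)+
  have carr: "gmon G x r K \<in> carrier G" "gmon G x r (k - 1) \<in> carrier G"
    using gmon_closed[OF closed(1)] gmon_closed[OF closed(2)] by auto
  show ?case
  proof (cases "k = Suc K")
    case True
    have "gmon G x (r(k := r k + 1)) K = gmon G x r K"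
      using True by (intro gmon_cong) auto
    then have "gmon G x (r(k := r k + 1)) (Suc K) = gmon G x r K \<otimes> (x k \<otimes> x k [^] r k)"
      using True closed by (simp add: int_pow_mult add.commute[of _ 1])
    also have "\<dots> = gmon G x r (k - 1) \<otimes> x k \<otimes> inv (gmon G x r (k - 1)) \<otimes> gmon G x r (Suc K)"
    proof -
      have "inv (gmon G x r K) \<otimes> (gmon G x r K \<otimes> x k [^] r k) = x k [^] r k"
        using carr closed by (simp add: m_assoc[symmetric])
      then show ?thesis
        using True carr closed by (simp add: m_assoc)
    qed
    finally show ?thesis .
  next
    case False
    then show ?thesis
      using Suc carr closed by (simp add: m_assoc)
  qed
qed

lemma gmon_unit_vector:
  assumes "x ` {1..K} \<subseteq> carrier G" "k \<in> {1..K}"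
  shows "gmon G x ((\<lambda>_. 0)(k := 1)) K = x k"
proof -
  have "x k \<in> carrier G"
    using assms by auto
  then show ?thesis
    using gmon_incr_exponent[OF assms, of "\<lambda>_. 0"] by simp
qed

lemma derived_rcos_conjugate:
  assumes "a \<in> carrier G" "b \<in> carrier G" "g \<in> carrier G"
  shows "derived G (carrier G) #> (a \<otimes> b \<otimes> inv a \<otimes> g) = derived G (carrier G) #> (b \<otimes> g)"
proof -
  interpret C: normal "derived G (carrier G)" G
    by (rule derived_self_is_normal)
  have "(a \<otimes> b \<otimes> inv a \<otimes> g) \<otimes> inv (b \<otimes> g) = a \<otimes> b \<otimes> inv a \<otimes> inv b"
    using assms by (simp add: inv_mult_group m_assoc) (simp add: m_assoc[symmetric])
  also have "\<dots> \<in> derived G (carrier G)"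
    unfolding derived_def using assms by (intro generate.incl) blast
  finally have "a \<otimes> b \<otimes> inv a \<otimes> g \<in> derived G (carrier G) #> (b \<otimes> g)"
    using assms by (subst C.rcos_module[OF is_group]) auto
  then show ?thesis
    using assms by (intro repr_independence[symmetric] C.subgroup_axioms) auto
qed

lemma Qset_eq_Xset_inter_center: "Qset G x n = Xset G x n \<inter> center G"
  using derived_in_carrier[of "carrier G"]
  by (auto simp: Qset_def Pset_def center_def centralizer_def)

end

lemma (in normal) rcos_mult_right_mem:
  assumes "t \<in> carrier G" "c \<in> H"
  shows "H #> (t \<otimes> c) = H #> t"
proof -
  have "t \<otimes> c \<in> H #> t"
    using assms coset_eq unfolding l_coset_def by blast
  then show ?thesis
    using assms by (intro repr_independence[symmetric] subgroup_axioms)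
qed

locale abelianization_basis = group G for G (structure) +
  fixes x :: "nat \<Rightarrow> 'a" and n :: nat
  assumes generators_closed: "x ` {1..n} \<subseteq> carrier G"
    and basis: "bij_betw (\<lambda>r. derived G (carrier G) #> gmon G x r n) (zvecs n)
      (carrier (G Mod derived G (carrier G)))"
begin

interpretation C: normal "derived G (carrier G)" G
  by (rule derived_self_is_normal)

lemma generator_closed: "k \<in> {1..n} \<Longrightarrow> x k \<in> carrier G"
  using generators_closed by auto

lemma gmon_prefix_closed: "j \<le> n \<Longrightarrow> gmon G x m j \<in> carrier G"
  using generators_closed by (intro gmon_closed) auto

lemma Tset_subset_carrier: "Tset G x n \<subseteq> carrier G"
  using gmon_closed[OF generators_closed] by (auto simp: Tset_def)

lemma one_in_Tset: "\<one> \<in> Tset G x n"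
  unfolding Tset_def zvecs_def by (auto intro!: exI[of _ "\<lambda>_. 0"])

lemma generator_in_Tset:
  assumes "k \<in> {1..n}"
  shows "x k \<in> Tset G x n"
  using gmon_unit_vector[OF generators_closed assms, symmetric] assms
  by (auto simp: Tset_def zvecs_def)

lemma Tset_rcos_inj:
  assumes "t \<in> Tset G x n" "t' \<in> Tset G x n"
    and "derived G (carrier G) #> t = derived G (carrier G) #> t'"
  shows "t = t'"
  using assms inj_onD[OF bij_betw_imp_inj_on[OF basis]] by (auto simp: Tset_def)

lemma Tset_decomp:
  assumes "g \<in> carrier G"
  shows "\<exists>t \<in> Tset G x n. \<exists>c \<in> derived G (carrier G). g = t \<otimes> c"
proof -
  have "derived G (carrier G) #> g \<in> (\<lambda>r. derived G (carrier G) #> gmon G x r n) ` zvecs n"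
    using assms bij_betw_imp_surj_on[OF basis] by (simp add: carrier_FactGroup)
  then obtain r where r: "r \<in> zvecs n"
    and eq: "derived G (carrier G) #> g = derived G (carrier G) #> gmon G x r n"
    by (rule imageE)
  have "gmon G x r n \<in> carrier G"
    using gmon_closed[OF generators_closed] .
  have "g \<in> derived G (carrier G) #> g"
    using assms C.subgroup_axioms by (rule rcos_self)
  also have "\<dots> = gmon G x r n <# derived G (carrier G)"
    using eq C.coset_eq \<open>gmon G x r n \<in> carrier G\<close> by simp
  finally show ?thesis
    using r unfolding l_coset_def Tset_def by blast
qed

lemma abpart_eq:
  assumes "t \<in> Tset G x n" "c \<in> derived G (carrier G)"
  shows "abpart G x n (t \<otimes> c) = t"
  unfolding abpart_def
proof (rule the_equality)
  show "t \<in> Tset G x n \<and> (\<exists>c' \<in> derived G (carrier G). t \<otimes> c = t \<otimes> c')"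
    using assms by blast
next
  fix t' assume "t' \<in> Tset G x n \<and> (\<exists>c' \<in> derived G (carrier G). t \<otimes> c = t' \<otimes> c')"
  then obtain c' where t': "t' \<in> Tset G x n" and c': "c' \<in> derived G (carrier G)"
    and eq: "t \<otimes> c = t' \<otimes> c'"
    by blast
  have "derived G (carrier G) #> t' = derived G (carrier G) #> (t' \<otimes> c')"
    using t' c' Tset_subset_carrier by (auto simp: C.rcos_mult_right_mem)
  also have "\<dots> = derived G (carrier G) #> t"
    using assms Tset_subset_carrier by (auto simp: eq[symmetric] C.rcos_mult_right_mem)
  finally show "t' = t"
    using Tset_rcos_inj[OF t' assms(1)] by blast
qed

lemma abpart_eq_self_iff:
  assumes "g \<in> carrier G"
  shows "abpart G x n g = g \<longleftrightarrow> g \<in> Tset G x n"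
proof
  assume "abpart G x n g = g"
  then show "g \<in> Tset G x n"
    using Tset_decomp[OF assms] abpart_eq by metis
next
  assume "g \<in> Tset G x n"
  then show "abpart G x n g = g"
    using abpart_eq[of g \<one>] Tset_subset_carrier by auto
qed

lemma center_iff_commutes_with_Tset:
  assumes "generate G (x ` {1..n}) = carrier G" "q \<in> carrier G"
  shows "q \<in> center G \<longleftrightarrow> (\<forall>t \<in> Tset G x n. q \<otimes> t = t \<otimes> q)"
proof
  assume "q \<in> center G"
  then show "\<forall>t \<in> Tset G x n. q \<otimes> t = t \<otimes> q"
    using Tset_subset_carrier by (auto simp: center_def)
next
  assume "\<forall>t \<in> Tset G x n. q \<otimes> t = t \<otimes> q"
  then show "q \<in> center G"
    using assms generators_closed generator_in_Tset
    by (intro center_if_commutes_with_generators[where H = "x ` {1..n}"]) auto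
qed

lemma generator_commutes_with_prefix:
  assumes m: "m \<in> zvecs n" and k: "k \<in> {1..n}"
    and mult_in_Tset: "x k \<otimes> gmon G x m n \<in> Tset G x n"
  shows "gmon G x m (k - 1) \<otimes> x k = x k \<otimes> gmon G x m (k - 1)"
proof -
  define a where "a = gmon G x m (k - 1)"
  have carr: "a \<in> carrier G" "x k \<in> carrier G" "gmon G x m n \<in> carrier G"
    unfolding a_def using k by (auto intro: gmon_prefix_closed generator_closed)
  have incr: "gmon G x (m(k := m k + 1)) n = a \<otimes> x k \<otimes> inv a \<otimes> gmon G x m n"
    unfolding a_def using generators_closed k by (rule gmon_incr_exponent)
  have "m(k := m k + 1) \<in> zvecs n"
    using m k by (auto simp: zvecs_def)
  then have incr_in_Tset: "gmon G x (m(k := m k + 1)) n \<in> Tset G x n"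
    unfolding Tset_def by blast
  have "derived G (carrier G) #> gmon G x (m(k := m k + 1)) n
      = derived G (carrier G) #> (x k \<otimes> gmon G x m n)"
    unfolding incr using carr by (rule derived_rcos_conjugate)
  with incr_in_Tset mult_in_Tset have "gmon G x (m(k := m k + 1)) n = x k \<otimes> gmon G x m n"
    by (rule Tset_rcos_inj)
  then have "a \<otimes> x k \<otimes> inv a \<otimes> gmon G x m n = x k \<otimes> gmon G x m n"
    unfolding incr .
  then have "a \<otimes> x k \<otimes> inv a = x k"
    using carr by simp
  then show ?thesis
    unfolding a_def[symmetric] using carr by (simp add: inv_solve_right')
qed

lemma Xset_iff_right_mult_closed:
  "q \<in> Xset G x n \<longleftrightarrow> q \<in> Tset G x n \<and> (\<forall>t \<in> Tset G x n. t \<otimes> q \<in> Tset G x n)"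
proof
  assume "q \<in> Xset G x n"
  then obtain m where m: "m \<in> zvecs n" and q: "q = gmon G x m n"
    and prefix: "\<And>k. k \<in> {1..n} \<Longrightarrow> comm G (gmon G x m (k - 1)) (x k) = \<one>"
    unfolding Xset_def by blast
  have commutes: "gmon G x m (k - 1) \<otimes> x k = x k \<otimes> gmon G x m (k - 1)" if k: "k \<in> {1..n}" for k
  proof -
    have "gmon G x m (k - 1) \<in> carrier G" "x k \<in> carrier G"
      using k by (auto intro: gmon_prefix_closed generator_closed)
    then show ?thesis
      using prefix[OF k] comm_eq_one_iff by blast
  qed
  have "gmon G x r n \<otimes> q = gmon G x (\<lambda>i. r i + m i) n" for r
    unfolding q using generators_closed commutes by (rule gmon_mult)
  moreover have "(\<lambda>i. r i + m i) \<in> zvecs n" if "r \<in> zvecs n" for r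
    using that m by (simp add: zvecs_def)
  ultimately have "t \<otimes> q \<in> Tset G x n" if "t \<in> Tset G x n" for t
    using that unfolding Tset_def by blast
  moreover have "q \<in> Tset G x n"
    using m q unfolding Tset_def by blast
  ultimately show "q \<in> Tset G x n \<and> (\<forall>t \<in> Tset G x n. t \<otimes> q \<in> Tset G x n)"
    by blast
next
  assume "q \<in> Tset G x n \<and> (\<forall>t \<in> Tset G x n. t \<otimes> q \<in> Tset G x n)"
  then obtain m where m: "m \<in> zvecs n" and q: "q = gmon G x m n"
    and closed: "\<forall>t \<in> Tset G x n. t \<otimes> q \<in> Tset G x n"
    unfolding Tset_def by blast
  have "comm G (gmon G x m (k - 1)) (x k) = \<one>" if k: "k \<in> {1..n}" for k
  proof -
    have "gmon G x m (k - 1) \<in> carrier G" "x k \<in> carrier G"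
      using k by (auto intro: gmon_prefix_closed generator_closed)
    moreover have "x k \<otimes> gmon G x m n \<in> Tset G x n"
      using closed generator_in_Tset[OF k] q by blast
    ultimately show ?thesis
      using generator_commutes_with_prefix[OF m k] comm_eq_one_iff by blast
  qed
  then show "q \<in> Xset G x n"
    using m q unfolding Xset_def by blast
qed

end

theorem proposition6:
  fixes G (structure) and x :: "nat \<Rightarrow> 'a" and n :: nat and q :: 'a
  assumes "group G"
    and "x ` {1..n} \<subseteq> carrier G"
    and "generate G (x ` {1..n}) = carrier G"
    and "finite (derived G (carrier G))"
    and "bij_betw (\<lambda>r. derived G (carrier G) #> gmon G x r n) (zvecs n)
           (carrier (G Mod derived G (carrier G)))"
    and "q \<in> carrier G"
  shows "q \<in> Qset G x n \<longleftrightarrow>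
    (\<forall>t \<in> Tset G x n. q \<otimes> t = t \<otimes> q \<and> t \<otimes> q = abpart G x n (q \<otimes> t))"
proof -
  interpret abelianization_basis G x n
    using assms(1,2,5) by (simp add: abelianization_basis_def abelianization_basis_axioms_def)
  have Xset: "q \<in> Xset G x n \<longleftrightarrow> (\<forall>t \<in> Tset G x n. t \<otimes> q \<in> Tset G x n)"
    using Xset_iff_right_mult_closed one_in_Tset l_one[OF assms(6)] by metis
  have abpart: "t \<otimes> q \<in> Tset G x n \<longleftrightarrow> t \<otimes> q = abpart G x n (q \<otimes> t)"
    if "t \<in> Tset G x n" "q \<otimes> t = t \<otimes> q" for t
    using abpart_eq_self_iff[of "t \<otimes> q"] that Tset_subset_carrier assms(6) by auto
  have "q \<in> Qset G x n \<longleftrightarrow> q \<in> center G \<and> q \<in> Xset G x n"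
    unfolding Qset_eq_Xset_inter_center by blast
  also have "\<dots> \<longleftrightarrow> (\<forall>t \<in> Tset G x n. q \<otimes> t = t \<otimes> q) \<and> (\<forall>t \<in> Tset G x n. t \<otimes> q \<in> Tset G x n)"
    by (simp only: center_iff_commutes_with_Tset[OF assms(3,6)] Xset)
  also have "\<dots> \<longleftrightarrow> (\<forall>t \<in> Tset G x n. q \<otimes> t = t \<otimes> q \<and> t \<otimes> q = abpart G x n (q \<otimes> t))"
    using abpart by blast
  finally show ?thesis .
qed

end
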